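(* Let $\mathscr N$ be a weakly reversible chemical reaction network. If $\mathscr N=\mathscr N_1\cup\cdots\cup\mathscr N_k$ is an incidence independent decomposition, then each subnetwork $\mathscr N_i$ is weakly reversible, i.e., the decomposition is weakly reversible.
   Context: A chemical reaction network (CRN) $\mathscr N=(\mathscr S,\mathscr C,\mathscr R)$ consists of: - a finite set $\mathscr S$ of species; - a finite set $\mathscr C\subseteq\mathbb R^{\mathscr S}_{\ge0}$ of complexes; - a set $\mathscr R\subseteq\mathscr C\times\mathscr C$ of reactions, viewed as a directed graph on $\mathscr C$, with no reaction $y\to y$ and every complex occurring in some reaction. The network is weakly reversible if each of its linkage classes (connected components of the underlying undirected graph) is strongly connected. A decomposition $\mathscr N=\mathscr N_1\cup\cdots\cup\mathscr N_k$ is the set of subnetworks induced by a partition $\{\mathscr R_1,\ldots,\mathscr R_k\}$ of $\mathscr R$; $\mathscr N_i$ has reactions $\mathscr R_i$ and the complexes occurring in them. A decomposition is weakly reversible if every subnetwork is weakly reversible. The incidence map is $I_a:\mathbb R^{\mathscr R}\to\mathbb R^{\mathscr C}$, sending the basis vector of $y\to y'$ to $\omega_{y'}-\omega_y$. The decomposition is incidence independent if $\operatorname{Im}I_a$ is the direct sum of the images of the restrictions $I_{a,i}$ of $I_a$ to $\mathbb R^{\mathscr R_i}$. Equivalently, $n-l=\sum_i(n_i-l_i)$, with $n$ and $l$ the numbers of complexes and linkage classes of $\mathscr N$, and $n_i$ and $l_i$ those of $\mathscr N_i$. *)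

theory Defs
  imports Complex_Main
begin

(* Complexes are vectors in R^S, represented as functions 's => real
   (zero outside the species set S). A reaction is a pair (y, y'). *)
type_synonym 's complex = "'s \<Rightarrow> real"
type_synonym 's reaction = "'s complex \<times> 's complex"

definition crn :: "'s set \<Rightarrow> 's complex set \<Rightarrow> 's reaction set \<Rightarrow> bool" where
  "crn S C R \<longleftrightarrow>
     finite S \<and> finite C \<and>
     (\<forall>y\<in>C. (\<forall>s\<in>S. y s \<ge> 0) \<and> (\<forall>s. s \<notin> S \<longrightarrow> y s = 0)) \<and>
     R \<subseteq> C \<times> C \<and>
     (\<forall>y. (y, y) \<notin> R) \<and>
     (\<forall>y\<in>C. \<exists>r\<in>R. fst r = y \<or> snd r = y)"

definition complexes :: "('c \<times> 'c) set \<Rightarrow> 'c set" where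
  "complexes R = fst ` R \<union> snd ` R"

definition linkage_classes :: "('c \<times> 'c) set \<Rightarrow> 'c set set" where
  "linkage_classes R = {{b. (a, b) \<in> (R \<union> R\<inverse>)\<^sup>*} | a. a \<in> complexes R}"

definition strongly_connected :: "('c \<times> 'c) set \<Rightarrow> 'c set \<Rightarrow> bool" where
  "strongly_connected R L \<longleftrightarrow> (\<forall>a\<in>L. \<forall>b\<in>L. (a, b) \<in> R\<^sup>*)"

definition weakly_reversible :: "('c \<times> 'c) set \<Rightarrow> bool" where
  "weakly_reversible R \<longleftrightarrow> (\<forall>L\<in>linkage_classes R. strongly_connected R L)"

definition decomposition :: "('c \<times> 'c) set \<Rightarrow> (nat \<Rightarrow> ('c \<times> 'c) set) \<Rightarrow> nat \<Rightarrow> bool" where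
  "decomposition R Rs k \<longleftrightarrow>
     (\<Union>i<k. Rs i) = R \<and> (\<forall>i<k. Rs i \<noteq> {}) \<and>
     (\<forall>i<k. \<forall>j<k. i \<noteq> j \<longrightarrow> Rs i \<inter> Rs j = {})"

definition omega :: "'c \<Rightarrow> 'c \<Rightarrow> real" where
  "omega y = (\<lambda>z. if z = y then 1 else 0)"

definition incidence_image :: "('c \<times> 'c) set \<Rightarrow> ('c \<Rightarrow> real) set" where
  "incidence_image Rs =
     {(\<lambda>z. \<Sum>r\<in>Rs. alpha r * (omega (snd r) z - omega (fst r) z)) | alpha. True}"

(* Im I_a is the (internal) direct sum of the Im I_{a,i} *)
definition incidence_independent :: "('c \<times> 'c) set \<Rightarrow> (nat \<Rightarrow> ('c \<times> 'c) set) \<Rightarrow> nat \<Rightarrow> bool" where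
  "incidence_independent R Rs k \<longleftrightarrow>
     incidence_image R =
       {(\<lambda>z. \<Sum>i<k. v i z) | v. \<forall>i<k. v i \<in> incidence_image (Rs i)} \<and>
     (\<forall>v. (\<forall>i<k. v i \<in> incidence_image (Rs i)) \<and> (\<lambda>z. \<Sum>i<k. v i z) = (\<lambda>z. 0)
           \<longrightarrow> (\<forall>i<k. v i = (\<lambda>z. 0)))"

end

theory Submission
  imports Defs
begin

text \<open>Let \<open>a \<rightarrow> b\<close> be a reaction of \<open>N\<^sub>i\<close>. Weak reversibility of \<open>N\<close> gives a path from \<open>b\<close>
  back to \<open>a\<close>; the path together with the reaction is a nonnegative circulation \<open>\<gamma>\<close> on \<open>R\<close>,
  i.e. \<open>I\<^sub>a \<gamma> = 0\<close>, with \<open>\<gamma>(a \<rightarrow> b) > 0\<close>. Splitting \<open>\<gamma>\<close> along the partition writes \<open>0\<close> as a sum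
  of elements of the images of the \<open>I\<^sub>a\<^sub>,\<^sub>j\<close>, so by incidence independence each restriction of
  \<open>\<gamma>\<close> is itself a circulation. No reaction leaves the set of complexes reachable from \<open>b\<close>,
  so a nonnegative circulation on \<open>R\<^sub>i\<close> cannot carry positive flow into it; hence \<open>a\<close> is reachable from \<open>b\<close> within \<open>R\<^sub>i\<close>.\<close>

definition incidence :: "('c \<times> 'c) set \<Rightarrow> ('c \<times> 'c \<Rightarrow> real) \<Rightarrow> 'c \<Rightarrow> real" where
  "incidence E \<alpha> = (\<lambda>z. \<Sum>r\<in>E. \<alpha> r * (omega (snd r) z - omega (fst r) z))"

lemma incidence_image_eq_range: "incidence_image E = range (incidence E)"
  unfolding incidence_image_def incidence_def by auto

lemma sum_omega: "finite A \<Longrightarrow> (\<Sum>z\<in>A. omega y z) = (if y \<in> A then 1 else 0)"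
  unfolding omega_def by (simp add: sum.delta')

lemma incidence_add_reaction:
  assumes "finite E" and "(a, b) \<in> E"
  shows "incidence E (\<lambda>r. \<alpha> r + (if r = (a, b) then 1 else 0)) z
           = incidence E \<alpha> z + omega b z - omega a z"
proof -
  have "incidence E (\<lambda>r. \<alpha> r + (if r = (a, b) then 1 else 0)) z
      = incidence E \<alpha> z + (\<Sum>r\<in>E. if r = (a, b) then omega (snd r) z - omega (fst r) z else 0)"
    unfolding incidence_def sum.distrib[symmetric] by (rule sum.cong) (auto simp: algebra_simps)
  with assms show ?thesis by (simp add: sum.delta')
qed

lemma incidence_UNION_disjoint:
  fixes k :: nat
  assumes "\<And>i. i < k \<Longrightarrow> finite (Rs i)"
    and "\<forall>i<k. \<forall>j<k. i \<noteq> j \<longrightarrow> Rs i \<inter> Rs j = {}"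
  shows "incidence (\<Union>i<k. Rs i) \<alpha> z = (\<Sum>i<k. incidence (Rs i) \<alpha> z)"
  unfolding incidence_def by (rule sum.UNION_disjoint) (use assms in auto)

lemma weakly_reversible_iff: "weakly_reversible E \<longleftrightarrow> (\<forall>(a, b)\<in>E. (b, a) \<in> E\<^sup>*)"
proof
  assume wr: "weakly_reversible E"
  show "\<forall>(a, b)\<in>E. (b, a) \<in> E\<^sup>*"
  proof clarify
    fix a b assume ab: "(a, b) \<in> E"
    let ?L = "{y. (a, y) \<in> (E \<union> E\<inverse>)\<^sup>*}"
    have "?L \<in> linkage_classes E"
      using ab unfolding linkage_classes_def complexes_def by force
    with wr have "strongly_connected E ?L" unfolding weakly_reversible_def by blast
    moreover have "a \<in> ?L" "b \<in> ?L" using ab by auto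
    ultimately show "(b, a) \<in> E\<^sup>*" unfolding strongly_connected_def by blast
  qed
next
  assume rev: "\<forall>(a, b)\<in>E. (b, a) \<in> E\<^sup>*"
  have sym: "(E \<union> E\<inverse>)\<inverse> = E \<union> E\<inverse>" by auto
  have "(E \<union> E\<inverse>)\<^sup>* \<subseteq> (E\<^sup>*)\<^sup>*" by (rule rtrancl_mono) (use rev in auto)
  then have undirected: "(E \<union> E\<inverse>)\<^sup>* \<subseteq> E\<^sup>*" by simp
  show "weakly_reversible E"
    unfolding weakly_reversible_def linkage_classes_def strongly_connected_def
  proof clarify
    fix a x y assume x: "(a, x) \<in> (E \<union> E\<inverse>)\<^sup>*" and y: "(a, y) \<in> (E \<union> E\<inverse>)\<^sup>*"
    have "(x, a) \<in> (E \<union> E\<inverse>)\<^sup>*"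
      using x rtrancl_converseI[of a x "E \<union> E\<inverse>"] by (simp add: rtrancl_converse sym)
    from this y have "(x, y) \<in> (E \<union> E\<inverse>)\<^sup>*" by (rule rtrancl_trans)
    with undirected show "(x, y) \<in> E\<^sup>*" by blast
  qed
qed

lemma path_nonneg_flow:
  assumes "finite E" and "(b, a) \<in> E\<^sup>*"
  shows "\<exists>\<beta>. (\<forall>r. \<beta> r \<ge> 0) \<and> (\<forall>z. incidence E \<beta> z = omega a z - omega b z)"
  using assms(2)
proof (induction rule: rtrancl_induct)
  case base
  show ?case by (rule exI[of _ "\<lambda>_. 0"]) (simp add: incidence_def)
next
  case (step c a)
  then obtain \<beta> where "\<forall>r. \<beta> r \<ge> 0" and "\<forall>z. incidence E \<beta> z = omega c z - omega b z"
    by blast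
  with step.hyps(2) assms(1) show ?case
    by (intro exI[of _ "\<lambda>r. \<beta> r + (if r = (c, a) then 1 else 0)"])
       (simp add: incidence_add_reaction)
qed

lemma reversible_reaction_positive_circulation:
  assumes "finite E" and "(a, b) \<in> E" and "(b, a) \<in> E\<^sup>*"
  shows "\<exists>\<gamma>. (\<forall>r. \<gamma> r \<ge> 0) \<and> \<gamma> (a, b) > 0 \<and> incidence E \<gamma> = (\<lambda>z. 0)"
proof -
  obtain \<beta> where nonneg: "\<forall>r. \<beta> r \<ge> 0" and flow: "\<forall>z. incidence E \<beta> z = omega a z - omega b z"
    using path_nonneg_flow[OF assms(1,3)] by blast
  let ?\<gamma> = "\<lambda>r. \<beta> r + (if r = (a, b) then 1 else 0)"
  have "incidence E ?\<gamma> = (\<lambda>z. 0)"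
    using flow assms(1,2) by (simp add: fun_eq_iff incidence_add_reaction)
  moreover have "?\<gamma> (a, b) > 0" using nonneg by (simp add: add_nonneg_pos)
  ultimately show ?thesis using nonneg by (intro exI[of _ ?\<gamma>]) simp
qed

text \<open>Summing the circulation condition over the set \<open>X\<close> of complexes reachable from \<open>b\<close> gives
  the net inflow into \<open>X\<close>, which is zero; but no reaction leaves \<open>X\<close> and \<open>a \<rightarrow> b\<close> enters it.\<close>

lemma nonneg_circulation_reverse_reachable:
  assumes fin: "finite E" and nonneg: "\<forall>r. \<alpha> r \<ge> 0"
    and circ: "incidence E \<alpha> = (\<lambda>z. 0)"
    and ab: "(a, b) \<in> E" and pos: "\<alpha> (a, b) > 0"
  shows "(b, a) \<in> E\<^sup>*"
proof (rule ccontr)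
  assume unreachable: "(b, a) \<notin> E\<^sup>*"
  define X where "X = {x. (b, x) \<in> E\<^sup>*} \<inter> (fst ` E \<union> snd ` E)"
  define \<delta> where "\<delta> r = \<alpha> r * ((if snd r \<in> X then 1 else 0) - (if fst r \<in> X then 1 else 0))" for r
  have "finite X" unfolding X_def using fin by auto
  have "0 = (\<Sum>z\<in>X. incidence E \<alpha> z)" using circ by simp
  also have "\<dots> = (\<Sum>r\<in>E. \<alpha> r * ((\<Sum>z\<in>X. omega (snd r) z) - (\<Sum>z\<in>X. omega (fst r) z)))"
    unfolding incidence_def
    by (subst sum.swap) (simp add: sum_distrib_left sum_subtractf right_diff_distrib)
  also have "\<dots> = (\<Sum>r\<in>E. \<delta> r)"
    using \<open>finite X\<close> by (simp add: sum_omega \<delta>_def)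
  finally have zero: "(\<Sum>r\<in>E. \<delta> r) = 0" by simp
  have closed: "snd r \<in> X" if "r \<in> E" "fst r \<in> X" for r
    using that unfolding X_def by (cases r) (auto intro: rtrancl_into_rtrancl rev_image_eqI)
  have "\<delta> r \<ge> 0" if "r \<in> E" for r
    using closed[OF that] nonneg[rule_format, of r] by (auto simp: \<delta>_def)
  moreover have "\<delta> (a, b) > 0"
    using ab unreachable pos unfolding X_def \<delta>_def by force
  ultimately have "(\<Sum>r\<in>E. \<delta> r) > 0" by (intro sum_pos2[OF fin ab]) auto
  with zero show False by simp
qed

lemma incidence_independent_restrict_circulation:
  assumes dec: "decomposition R Rs k" and fin: "finite R"
    and indep: "incidence_independent R Rs k"
    and circ: "incidence R \<gamma> = (\<lambda>z. 0)" and "i < k"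
  shows "incidence (Rs i) \<gamma> = (\<lambda>z. 0)"
proof -
  have part: "(\<Union>j<k. Rs j) = R" "\<forall>j<k. \<forall>l<k. j \<noteq> l \<longrightarrow> Rs j \<inter> Rs l = {}"
    using dec unfolding decomposition_def by auto
  have "finite (Rs j)" if "j < k" for j
    using fin by (rule finite_subset[rotated]) (use part(1) that in blast)
  then have sum_zero: "(\<lambda>z. \<Sum>j<k. incidence (Rs j) \<gamma> z) = (\<lambda>z. 0)"
    using circ part by (simp add: incidence_UNION_disjoint[symmetric])
  have in_image: "\<forall>j<k. incidence (Rs j) \<gamma> \<in> incidence_image (Rs j)"
    by (simp add: incidence_image_eq_range)
  have zero_parts: "\<forall>v. (\<forall>j<k. v j \<in> incidence_image (Rs j)) \<and> (\<lambda>z. \<Sum>j<k. v j z) = (\<lambda>z. 0)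
                    \<longrightarrow> (\<forall>j<k. v j = (\<lambda>z. 0))"
    using indep unfolding incidence_independent_def by (rule conjunct2)
  show ?thesis
    using zero_parts[rule_format, OF conjI[OF in_image sum_zero]] \<open>i < k\<close> by blast
qed

theorem mainTheorem5:
  fixes S :: "'s set" and C :: "'s complex set" and R :: "'s reaction set"
    and Rs :: "nat \<Rightarrow> 's reaction set" and k :: nat
  assumes "crn S C R"
    and "weakly_reversible R"
    and "decomposition R Rs k"
    and "incidence_independent R Rs k"
  shows "\<forall>i<k. weakly_reversible (Rs i)"
proof (intro allI impI)
  fix i assume "i < k"
  have "finite R" using assms(1) unfolding crn_def by (meson finite_SigmaI finite_subset)
  have Rs_sub: "Rs i \<subseteq> R" using assms(3) \<open>i < k\<close> unfolding decomposition_def by auto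
  show "weakly_reversible (Rs i)"
    unfolding weakly_reversible_iff
  proof clarify
    fix a b assume ab: "(a, b) \<in> Rs i"
    with Rs_sub assms(2) have "(b, a) \<in> R\<^sup>*" by (auto simp: weakly_reversible_iff)
    then obtain \<gamma> where nonneg: "\<forall>r. \<gamma> r \<ge> 0" and pos: "\<gamma> (a, b) > 0"
      and "incidence R \<gamma> = (\<lambda>z. 0)"
      using reversible_reaction_positive_circulation[OF \<open>finite R\<close>] ab Rs_sub by blast
    then have circ_i: "incidence (Rs i) \<gamma> = (\<lambda>z. 0)"
      using incidence_independent_restrict_circulation[OF assms(3) \<open>finite R\<close> assms(4)] \<open>i < k\<close>
      by blast
    have "finite (Rs i)" using Rs_sub \<open>finite R\<close> by (rule finite_subset)
    from this nonneg circ_i ab pos show "(b, a) \<in> (Rs i)\<^sup>*"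
      by (rule nonneg_circulation_reverse_reachable)
  qed
qed

end
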